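(* For all $n\ge 1$, $|F_n(321,21354)|=2^n-\binom{n}{2}-1$.
   Context: A permutation $\pi$ avoids a classical pattern $p\in S_k$ if no subsequence of $\pi$ of length $k$ is order-isomorphic to $p$. A Fishburn permutation is a permutation $\pi=\pi_1\cdots\pi_n$ of $[n]$ for which there are no indices $i<j$ with $\pi_j<\pi_i<\pi_{i+1}$ and $\pi_i=\pi_j+1$. $F_n(\sigma_1,\dots,\sigma_k)$ denotes the set of Fishburn permutations of length $n$ avoiding each of the classical patterns $\sigma_1,\dots,\sigma_k$. *)

theory Defs
  imports Main
begin

definition perms_of :: "nat \<Rightarrow> nat list set" where
  "perms_of n = {xs. distinct xs \<and> set xs = {1..n}}"

definition contains :: "nat list \<Rightarrow> nat list \<Rightarrow> bool" where
  "contains xs p \<longleftrightarrow> (\<exists>idx :: nat \<Rightarrow> nat.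
      (\<forall>a b. a < b \<and> b < length p \<longrightarrow> idx a < idx b) \<and>
      (\<forall>a < length p. idx a < length xs) \<and>
      (\<forall>a < length p. \<forall>b < length p. (xs ! idx a < xs ! idx b) \<longleftrightarrow> (p ! a < p ! b)))"

definition avoids :: "nat list \<Rightarrow> nat list \<Rightarrow> bool" where
  "avoids xs p \<longleftrightarrow> \<not> contains xs p"

text \<open>Fishburn: no indices i < j (1-based in the paper; 0-based here) with
  pi_j < pi_i < pi_(i+1) and pi_i = pi_j + 1.\<close>

definition fishburn :: "nat list \<Rightarrow> bool" where
  "fishburn xs \<longleftrightarrow> \<not> (\<exists>i j. i < j \<and> j < length xs \<and> i + 1 < length xs \<and>
      xs ! j < xs ! i \<and> xs ! i < xs ! (i + 1) \<and> xs ! i = xs ! j + 1)"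

definition F :: "nat \<Rightarrow> nat list list \<Rightarrow> nat list set" where
  "F n pats = {xs \<in> perms_of n. fishburn xs \<and> (\<forall>p \<in> set pats. avoids xs p)}"

end

theory Submission
  imports Defs
begin

text \<open>
  Write \<open>A\<^sub>n\<close> for the permutations counted. Those starting with \<open>1\<close> are \<open>1 \<oplus> \<sigma>\<close> with
  \<open>\<sigma> \<in> A\<^sub>n\<^sub>-\<^sub>1\<close>. Any other \<open>\<pi> \<in> A\<^sub>N\<^sub>+\<^sub>2\<close> has \<open>\<pi>\<^sub>2 = 1\<close>, and by \<open>321\<close>-avoidance its later
  left-to-right maxima and its later non-maxima both increase. Avoiding \<open>21354\<close> forces the
  non-maxima to take the values \<open>{2..m+j} - {m}\<close> and the maxima the values \<open>{m+j+1..N+2}\<close>,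
  where \<open>m = \<pi>\<^sub>1\<close> and \<open>j \<ge> 0\<close>; so \<open>\<pi>\<close> is determined by \<open>j\<close> and the word of length \<open>N\<close> recording
  which positions hold non-maxima. For \<open>j > 0\<close>, \<open>21354\<close>-avoidance also puts the values
  \<open>m+1, ..., m+j\<close> at consecutive positions with only maxima after them, and the Fishburn condition
  at the first maximum (value \<open>m+j+1\<close>, with \<open>m+j\<close> to its right) makes the next position a
  non-maximum. So the word is a stem of length \<open>k < N\<close> (non-maxima, one maximum, then nothing or a
  non-maximum followed by anything; \<open>2\<^sup>k\<^sup>-\<^sup>1\<close> choices), then \<open>j\<close> non-maxima and \<open>N - k - j\<close> maxima.
  Hence \<open>|A\<^sub>N\<^sub>+\<^sub>2| - |A\<^sub>N\<^sub>+\<^sub>1| = 2\<^sup>N + \<Sum>\<^sub>k\<^sub><\<^sub>N 2\<^sup>k\<^sup>-\<^sup>1 (N - k) = 2\<^sup>N\<^sup>+\<^sup>1 - N - 1\<close>, which sums to the formula.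
\<close>

section \<open>The permutations counted\<close>

definition has_321 :: "nat list \<Rightarrow> bool" where
  "has_321 xs \<longleftrightarrow> (\<exists>i j k. i < j \<and> j < k \<and> k < length xs \<and> xs!j < xs!i \<and> xs!k < xs!j)"

definition has_21354 :: "nat list \<Rightarrow> bool" where
  "has_21354 xs \<longleftrightarrow> (\<exists>a b c d e. a < b \<and> b < c \<and> c < d \<and> d < e \<and> e < length xs \<and>
      xs!b < xs!a \<and> xs!a < xs!c \<and> xs!c < xs!e \<and> xs!e < xs!d)"

lemma contains_321_iff: "contains xs [3,2,1] \<longleftrightarrow> has_321 xs"
proof
  assume "contains xs [3,2,1]"
  then obtain idx where mono: "\<forall>a b. a < b \<and> b < 3 \<longrightarrow> idx a < (idx b::nat)"
    and bound: "\<forall>a<3. idx a < length xs"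
    and order: "\<forall>a<3. \<forall>b<3. (xs ! idx a < xs ! idx b) = ([3,2,1::nat] ! a < [3,2,1] ! b)"
    unfolding contains_def by (auto simp: eval_nat_numeral)
  have "idx 0 < idx 1" "idx 1 < idx 2" "idx 2 < length xs" using mono bound by auto
  moreover have "xs ! idx 1 < xs ! idx 0" "xs ! idx 2 < xs ! idx 1"
    using order[rule_format, of 1 0] order[rule_format, of 2 1] by auto
  ultimately show "has_321 xs" unfolding has_321_def by blast
next
  assume "has_321 xs"
  then obtain i j k where "i < j" "j < k" "k < length xs" "xs!j < xs!i" "xs!k < xs!j"
    unfolding has_321_def by blast
  then show "contains xs [3,2,1]" unfolding contains_def
    by (intro exI[of _ "\<lambda>t. [i,j,k] ! t"]) (auto simp: less_Suc_eq)
qed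

lemma contains_21354_iff: "contains xs [2,1,3,5,4] \<longleftrightarrow> has_21354 xs"
proof
  assume "contains xs [2,1,3,5,4]"
  then obtain idx where mono: "\<forall>a b. a < b \<and> b < 5 \<longrightarrow> idx a < (idx b::nat)"
    and bound: "\<forall>a<5. idx a < length xs"
    and order: "\<forall>a<5. \<forall>b<5. (xs ! idx a < xs ! idx b) = ([2,1,3,5,4::nat] ! a < [2,1,3,5,4] ! b)"
    unfolding contains_def by (auto simp: eval_nat_numeral)
  have "idx 0 < idx 1" "idx 1 < idx 2" "idx 2 < idx 3" "idx 3 < idx 4" "idx 4 < length xs"
    using mono bound by auto
  moreover have "xs ! idx 1 < xs ! idx 0" "xs ! idx 0 < xs ! idx 2" "xs ! idx 2 < xs ! idx 4"
      "xs ! idx 4 < xs ! idx 3"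
    using order[rule_format, of 1 0] order[rule_format, of 0 2] order[rule_format, of 2 4]
      order[rule_format, of 4 3] by auto
  ultimately show "has_21354 xs" unfolding has_21354_def by blast
next
  assume "has_21354 xs"
  then obtain a b c d e where "a < b" "b < c" "c < d" "d < e" "e < length xs"
      "xs!b < xs!a" "xs!a < xs!c" "xs!c < xs!e" "xs!e < xs!d"
    unfolding has_21354_def by blast
  then show "contains xs [2,1,3,5,4]" unfolding contains_def
    by (intro exI[of _ "\<lambda>t. [a,b,c,d,e] ! t"]) (auto simp: less_Suc_eq)
qed

definition admissible :: "nat \<Rightarrow> nat list \<Rightarrow> bool" where
  "admissible n xs \<longleftrightarrow> xs \<in> perms_of n \<and> fishburn xs \<and> \<not> has_321 xs \<and> \<not> has_21354 xs"

lemma F_321_21354_eq: "F n [[3,2,1],[2,1,3,5,4]] = {xs. admissible n xs}"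
proof -
  have "F n [[3,2,1],[2,1,3,5,4]] =
      {xs \<in> perms_of n. fishburn xs \<and> avoids xs [3,2,1] \<and> avoids xs [2,1,3,5,4]}"
    unfolding F_def by simp
  then show ?thesis
    unfolding admissible_def avoids_def contains_321_iff contains_21354_iff by blast
qed

lemma has_321_prepend_one: "has_321 (1 # map Suc s) \<longleftrightarrow> has_321 s"
proof
  assume "has_321 (1 # map Suc s)"
  then obtain i j k where "i < j" "j < k" "k < Suc (length s)"
      "(1 # map Suc s)!j < (1 # map Suc s)!i" "(1 # map Suc s)!k < (1 # map Suc s)!j"
    unfolding has_321_def by auto
  then show "has_321 s" unfolding has_321_def
    by (cases i; cases j; cases k) (auto simp: nth_Cons')
next
  assume "has_321 s"
  then obtain i j k where "i < j" "j < k" "k < length s" "s!j < s!i" "s!k < s!j"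
    unfolding has_321_def by blast
  then show "has_321 (1 # map Suc s)" unfolding has_321_def
    by (intro exI[of _ "Suc i"] exI[of _ "Suc j"] exI[of _ "Suc k"]) auto
qed

lemma has_21354_prepend_one: "has_21354 (1 # map Suc s) \<longleftrightarrow> has_21354 s"
proof
  assume "has_21354 (1 # map Suc s)"
  then obtain a b c d e where h: "a < b" "b < c" "c < d" "d < e" "e < Suc (length s)"
      "(1 # map Suc s)!b < (1 # map Suc s)!a" "(1 # map Suc s)!a < (1 # map Suc s)!c"
      "(1 # map Suc s)!c < (1 # map Suc s)!e" "(1 # map Suc s)!e < (1 # map Suc s)!d"
    unfolding has_21354_def by auto
  have "a \<noteq> 0" using h(1-6) by (cases a; cases b) auto
  then obtain a' b' c' d' e' where idx: "a = Suc a'" "b = Suc b'" "c = Suc c'" "d = Suc d'" "e = Suc e'"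
    using h(1-4) by (metis Suc_pred gr0I less_trans)
  show "has_21354 s" unfolding has_21354_def
    using h unfolding idx by (intro exI[of _ a'] exI[of _ b'] exI[of _ c'] exI[of _ d'] exI[of _ e']) simp
next
  assume "has_21354 s"
  then obtain a b c d e where "a < b" "b < c" "c < d" "d < e" "e < length s"
      "s!b < s!a" "s!a < s!c" "s!c < s!e" "s!e < s!d"
    unfolding has_21354_def by blast
  then show "has_21354 (1 # map Suc s)" unfolding has_21354_def
    by (intro exI[of _ "Suc a"] exI[of _ "Suc b"] exI[of _ "Suc c"] exI[of _ "Suc d"] exI[of _ "Suc e"]) simp
qed

lemma fishburn_prepend_one: "fishburn (1 # map Suc s) \<longleftrightarrow> fishburn s"
proof
  assume f: "fishburn (1 # map Suc s)"
  show "fishburn s" unfolding fishburn_def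
  proof clarify
    fix i j assume "i < j" "j < length s" "i + 1 < length s" "s!j < s!i" "s!i < s!(i + 1)" "s!i = s!j + 1"
    then have "\<exists>i' j'. i' < j' \<and> j' < length (1 # map Suc s) \<and> i' + 1 < length (1 # map Suc s) \<and>
        (1 # map Suc s)!j' < (1 # map Suc s)!i' \<and> (1 # map Suc s)!i' < (1 # map Suc s)!(i' + 1) \<and>
        (1 # map Suc s)!i' = (1 # map Suc s)!j' + 1"
      by (intro exI[of _ "Suc i"] exI[of _ "Suc j"]) auto
    then show False using f unfolding fishburn_def by blast
  qed
next
  assume f: "fishburn s"
  show "fishburn (1 # map Suc s)" unfolding fishburn_def
  proof clarify
    fix i j assume h: "i < j" "j < length (1 # map Suc s)" "i + 1 < length (1 # map Suc s)"
      "(1 # map Suc s)!j < (1 # map Suc s)!i" "(1 # map Suc s)!i < (1 # map Suc s)!(i + 1)"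
      "(1 # map Suc s)!i = (1 # map Suc s)!j + 1"
    obtain i' j' where ij: "i = Suc i'" "j = Suc j'" using h(1,2,4) by (cases i; cases j) auto
    have "i' < j' \<and> j' < length s \<and> i' + 1 < length s \<and> s!j' < s!i' \<and> s!i' < s!(i' + 1) \<and> s!i' = s!j' + 1"
      using h unfolding ij by auto
    then show False using f unfolding fishburn_def by blast
  qed
qed

lemma perms_of_prepend_one: "1 # map Suc s \<in> perms_of (Suc n) \<longleftrightarrow> s \<in> perms_of n"
proof
  assume "1 # map Suc s \<in> perms_of (Suc n)"
  then have dist: "distinct (1 # map Suc s)" and set: "insert 1 (Suc ` set s) = {1..Suc n}"
    unfolding perms_of_def by auto
  have "set s = {1..n}"
  proof (intro equalityI subsetI)
    fix x assume x: "x \<in> set s"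
    then have "Suc x \<in> {1..Suc n}" using set by blast
    then show "x \<in> {1..n}" using x dist by (cases x) force+
  next
    fix x assume x: "x \<in> {1..n}"
    then have "Suc x \<in> insert 1 (Suc ` set s)" using set by auto
    then show "x \<in> set s" using x by auto
  qed
  then show "s \<in> perms_of n" using dist by (simp add: perms_of_def distinct_map)
next
  assume "s \<in> perms_of n"
  then have "distinct s" "set s = {1..n}" unfolding perms_of_def by auto
  moreover have "insert 1 (Suc ` {1..n}) = {1..Suc n}" by (auto simp: image_iff)
  ultimately show "1 # map Suc s \<in> perms_of (Suc n)" by (auto simp: perms_of_def distinct_map)
qed

lemma admissible_prepend_one: "admissible (Suc n) (1 # map Suc s) \<longleftrightarrow> admissible n s"
  unfolding admissible_def
  using perms_of_prepend_one fishburn_prepend_one has_321_prepend_one has_21354_prepend_one by blast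

section \<open>Decoding words into permutations\<close>

definition ntrue :: "bool list \<Rightarrow> nat \<Rightarrow> nat" where
  "ntrue w k = card {i. i < k \<and> w!i}"

definition nfalse :: "bool list \<Rightarrow> nat \<Rightarrow> nat" where
  "nfalse w k = card {i. i < k \<and> \<not> w!i}"

lemma ntrue_0 [simp]: "ntrue w 0 = 0" and nfalse_0 [simp]: "nfalse w 0 = 0"
  by (auto simp: ntrue_def nfalse_def)

lemma ntrue_Suc: "ntrue w (Suc k) = ntrue w k + (if w!k then 1 else 0)"
proof -
  have "{i. i < Suc k \<and> w!i} = (if w!k then insert k {i. i < k \<and> w!i} else {i. i < k \<and> w!i})"
    by (auto simp: less_Suc_eq)
  then show ?thesis by (simp add: ntrue_def)
qed

lemma nfalse_Suc: "nfalse w (Suc k) = nfalse w k + (if w!k then 0 else 1)"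
proof -
  have "{i. i < Suc k \<and> \<not> w!i} = (if w!k then {i. i < k \<and> \<not> w!i} else insert k {i. i < k \<and> \<not> w!i})"
    by (auto simp: less_Suc_eq)
  then show ?thesis by (simp add: nfalse_def)
qed

lemma ntrue_plus_nfalse: "ntrue w k + nfalse w k = k"
  by (induction k) (auto simp: ntrue_Suc nfalse_Suc)

lemma ntrue_less: "k < k' \<Longrightarrow> w!k \<Longrightarrow> ntrue w k < ntrue w k'"
proof (induction k' rule: less_induct)
  case (less k')
  then show ?case by (cases k') (auto simp: ntrue_Suc less_Suc_eq)
qed

lemma nfalse_less: "k < k' \<Longrightarrow> \<not> w!k \<Longrightarrow> nfalse w k < nfalse w k'"
proof (induction k' rule: less_induct)
  case (less k')
  then show ?case by (cases k') (auto simp: nfalse_Suc less_Suc_eq)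
qed

lemma nfalse_eq_0_nth: "nfalse w k = 0 \<Longrightarrow> i < k \<Longrightarrow> w!i"
  unfolding nfalse_def by (auto simp: card_eq_0_iff)

lemma ntrue_append_left: "k \<le> length y \<Longrightarrow> ntrue (y @ z) k = ntrue y k"
  by (induction k) (auto simp: ntrue_Suc nth_append)

lemma ntrue_append: "ntrue (y @ z) (length y + k) = ntrue y (length y) + ntrue z k"
  by (induction k) (auto simp: ntrue_Suc nth_append ntrue_append_left)

lemma ntrue_replicate: "k \<le> j \<Longrightarrow> ntrue (replicate j b) k = (if b then k else 0)"
  by (induction k) (auto simp: ntrue_Suc)

lemma ntrue_stem_block:
  "ntrue (y @ replicate j True @ replicate r False) (length y + j + r) = ntrue y (length y) + j"
  using ntrue_append[of y "replicate j True @ replicate r False" "j + r"]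
    ntrue_append[of "replicate j True" "replicate r False" r]
  by (simp add: ntrue_replicate add.assoc)

text \<open>
  The code of a permutation \<open>p\<close> of length \<open>N + 2\<close>: letter \<open>k\<close> of \<open>code_word p\<close> records that
  \<open>p!(k+2)\<close> is not a left-to-right maximum, and \<open>code_shift p\<close> is the \<open>j\<close> above, read off at the
  first left-to-right maximum after position \<open>1\<close>, whose value is \<open>p!0 + j + 1\<close>. \<open>decode\<close> inverts
  this: the first entry \<open>m\<close> is recovered from the number \<open>m + j - 2\<close> of non-maxima, and an entry is
  computed from its rank among the entries of its kind.
\<close>

definition ltr_max :: "nat list \<Rightarrow> nat \<Rightarrow> bool" where
  "ltr_max p a \<longleftrightarrow> (\<forall>i<a. p!i < p!a)"

definition has_late_ltr_max :: "nat list \<Rightarrow> bool" where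
  "has_late_ltr_max p \<longleftrightarrow> (\<exists>k<length p - 2. ltr_max p (k + 2))"

definition first_ltr_max :: "nat list \<Rightarrow> nat" where
  "first_ltr_max p = (LEAST k. ltr_max p (k + 2))"

definition code_word :: "nat list \<Rightarrow> bool list" where
  "code_word p = map (\<lambda>k. \<not> ltr_max p (k + 2)) [0..<length p - 2]"

definition code_shift :: "nat list \<Rightarrow> nat" where
  "code_shift p = (if has_late_ltr_max p then p!(first_ltr_max p + 2) - p!0 - 1 else 0)"

lemma has_late_ltr_max_if_shift_pos: "0 < code_shift p \<Longrightarrow> has_late_ltr_max p"
  unfolding code_shift_def by (cases "has_late_ltr_max p") auto

lemma ltr_max_less: "a < b \<Longrightarrow> ltr_max p b \<Longrightarrow> p!a < p!b"
  unfolding ltr_max_def by simp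

definition dec_head :: "bool list \<Rightarrow> nat \<Rightarrow> nat" where
  "dec_head w j = ntrue w (length w) + 2 - j"

definition dec_entry :: "bool list \<Rightarrow> nat \<Rightarrow> nat \<Rightarrow> nat" where
  "dec_entry w j k =
    (if w!k then (if ntrue w k < dec_head w j - 2 then ntrue w k + 2 else ntrue w k + 3)
     else dec_head w j + j + 1 + nfalse w k)"

definition decode :: "bool list \<Rightarrow> nat \<Rightarrow> nat list" where
  "decode w j = dec_head w j # 1 # map (dec_entry w j) [0..<length w]"

definition stem :: "bool list \<Rightarrow> bool" where
  "stem y \<longleftrightarrow> (\<exists>f<length y. \<not> y!f \<and> (\<forall>k<f. y!k) \<and> (Suc f = length y \<or> y!(Suc f)))"

definition valid_code :: "bool list \<Rightarrow> nat \<Rightarrow> bool" where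
  "valid_code w j \<longleftrightarrow> j = 0 \<or> (\<exists>y r. stem y \<and> w = y @ replicate j True @ replicate r False)"

definition low_pos :: "bool list \<Rightarrow> nat \<Rightarrow> bool" where
  "low_pos w a \<longleftrightarrow> a = 1 \<or> (2 \<le> a \<and> w!(a-2))"

lemma length_decode [simp]: "length (decode w j) = length w + 2"
  by (simp add: decode_def)

lemma decode_nth_0 [simp]: "decode w j ! 0 = dec_head w j"
  and decode_nth_1 [simp]: "decode w j ! Suc 0 = 1"
  and decode_nth_Suc_Suc [simp]: "k < length w \<Longrightarrow> decode w j ! Suc (Suc k) = dec_entry w j k"
  by (simp_all add: decode_def)

lemma low_pos_Suc_Suc [simp]: "low_pos w (Suc (Suc k)) \<longleftrightarrow> w!k"
  by (simp add: low_pos_def)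

lemma less_Suc_Suc_cases:
  assumes "a < L + 2"
  obtains "a = 0" | "a = 1" | k where "a = Suc (Suc k)" "k < L"
  using assms by (cases a; cases "a - 1") auto

context
  fixes w :: "bool list" and j :: nat
  assumes valid: "valid_code w j"
begin

lemma shift_le_ntrue: "j \<le> ntrue w (length w)"
proof -
  consider "j = 0" | y r where "w = y @ replicate j True @ replicate r False"
    using valid unfolding valid_code_def by blast
  then show ?thesis
  proof cases
    case 2
    then show ?thesis using ntrue_stem_block[of y j r] by (simp add: add.assoc)
  qed simp
qed

lemma dec_head_plus_shift: "dec_head w j + j = ntrue w (length w) + 2"
  and dec_head_ge_2: "dec_head w j \<ge> 2"
  using shift_le_ntrue by (auto simp: dec_head_def)

lemma dec_entry_below_head:
  "w!k \<Longrightarrow> ntrue w k < dec_head w j - 2 \<Longrightarrow>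
    dec_entry w j k = ntrue w k + 2 \<and> dec_entry w j k < dec_head w j"
  by (auto simp: dec_entry_def)

lemma dec_entry_above_head:
  assumes "k < length w" "w!k" "\<not> ntrue w k < dec_head w j - 2"
  shows "dec_head w j < dec_entry w j k \<and> dec_entry w j k \<le> dec_head w j + j"
  using ntrue_less[OF assms(1,2)] assms dec_head_plus_shift by (auto simp: dec_entry_def)

lemma dec_entry_true_bounds: "k < length w \<Longrightarrow> w!k \<Longrightarrow>
    2 \<le> dec_entry w j k \<and> dec_entry w j k \<le> dec_head w j + j \<and> dec_entry w j k \<noteq> dec_head w j"
  using dec_head_ge_2
  by (cases "ntrue w k < dec_head w j - 2") (auto dest: dec_entry_below_head dec_entry_above_head)

lemma dec_entry_false_bounds: "k < length w \<Longrightarrow> \<not> w!k \<Longrightarrow>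
    dec_head w j + j + 1 \<le> dec_entry w j k \<and> dec_entry w j k \<le> length w + 2"
  using nfalse_less[of k "length w" w] dec_head_plus_shift ntrue_plus_nfalse[of w "length w"]
  by (auto simp: dec_entry_def)

lemma dec_entry_true_mono: "k < k' \<Longrightarrow> w!k \<Longrightarrow> w!k' \<Longrightarrow> dec_entry w j k < dec_entry w j k'"
  using ntrue_less[of k k' w] by (auto simp: dec_entry_def)

lemma dec_entry_false_mono: "k < k' \<Longrightarrow> \<not> w!k \<Longrightarrow> \<not> w!k' \<Longrightarrow> dec_entry w j k < dec_entry w j k'"
  using nfalse_less[of k k' w] by (auto simp: dec_entry_def)

lemma decode_low_less:
  assumes "a < b" "b < length w + 2" "low_pos w a"
  shows "decode w j ! a < decode w j ! b"
proof -
  obtain b' where b': "b = Suc (Suc b')" "b' < length w"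
    using assms by (cases rule: less_Suc_Suc_cases[OF assms(2)]) (auto simp: low_pos_def)
  show ?thesis
  proof (cases "a = 1")
    case True
    then show ?thesis using b' dec_entry_true_bounds[of b'] dec_entry_false_bounds[of b'] dec_head_plus_shift
      by (cases "w!b'") auto
  next
    case False
    have "a < length w + 2" using assms by simp
    then obtain a' where a': "a = Suc (Suc a')" "w!a'"
      using assms False by (cases rule: less_Suc_Suc_cases) (auto simp: low_pos_def)
    then show ?thesis using assms b' dec_entry_true_mono[of a' b'] dec_entry_true_bounds[of a']
        dec_entry_false_bounds[of b']
      by (cases "w!b'") auto
  qed
qed

lemma decode_high_less:
  assumes "a < b" "b < length w + 2" "\<not> low_pos w a" "\<not> low_pos w b"
  shows "decode w j ! a < decode w j ! b"
proof -
  obtain b' where b': "b = Suc (Suc b')" "b' < length w" "\<not> w!b'"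
    using assms by (cases rule: less_Suc_Suc_cases[OF assms(2)]) (auto simp: low_pos_def)
  show ?thesis
  proof (cases "a = 0")
    case True
    then show ?thesis using b' dec_entry_false_bounds[of b'] by auto
  next
    case False
    have "a < length w + 2" using assms by simp
    then obtain a' where a': "a = Suc (Suc a')" "\<not> w!a'"
      using assms False by (cases rule: less_Suc_Suc_cases) (auto simp: low_pos_def)
    then show ?thesis using assms b' dec_entry_false_mono[of a' b'] by auto
  qed
qed

lemma decode_high_bounds:
  assumes "a < length w + 2" "\<not> low_pos w a"
  shows "(a = 0 \<and> decode w j ! a = dec_head w j) \<or>
    (dec_head w j + j + 1 \<le> decode w j ! a \<and> decode w j ! a \<le> length w + 2)"
proof (cases rule: less_Suc_Suc_cases[OF assms(1)])
  case (3 k)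
  then show ?thesis using assms dec_entry_false_bounds[of k] by auto
qed (use assms in \<open>auto simp: low_pos_def\<close>)

lemma decode_low_bounds:
  assumes "a < length w + 2" "low_pos w a"
  shows "1 \<le> decode w j ! a \<and> decode w j ! a \<le> dec_head w j + j \<and> decode w j ! a \<noteq> dec_head w j"
proof (cases rule: less_Suc_Suc_cases[OF assms(1)])
  case (3 k)
  then show ?thesis using assms dec_entry_true_bounds[of k] by auto
qed (use assms dec_head_ge_2 in \<open>auto simp: low_pos_def\<close>)

lemma decode_not_has_321: "\<not> has_321 (decode w j)"
proof
  assume "has_321 (decode w j)"
  then obtain a b c where h: "a < b" "b < c" "c < length w + 2"
      "decode w j ! b < decode w j ! a" "decode w j ! c < decode w j ! b"
    unfolding has_321_def by auto
  then have "\<not> low_pos w a" "\<not> low_pos w b" using decode_low_less[of a b] decode_low_less[of b c] by auto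
  then show False using decode_high_less[of a b] h by auto
qed

lemma distinct_decode: "distinct (decode w j)"
proof -
  have "decode w j ! a \<noteq> decode w j ! b" if ab: "a < b" "b < length w + 2" for a b
  proof (cases "low_pos w a")
    case True
    then show ?thesis using decode_low_less[OF ab] by simp
  next
    case high_a: False
    show ?thesis
    proof (cases "low_pos w b")
      case True
      have "a < length w + 2" using ab by simp
      with high_a show ?thesis using decode_high_bounds[of a] decode_low_bounds[OF ab(2) True] by auto
    next
      case False
      then show ?thesis using decode_high_less[OF ab high_a] by simp
    qed
  qed
  then show ?thesis unfolding distinct_conv_nth length_decode by (metis linorder_neqE_nat)
qed

lemma set_decode: "set (decode w j) = {1..length w + 2}"
proof -
  have "decode w j ! a \<in> {1..length w + 2}" if a: "a < length w + 2" for a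
  proof (cases "low_pos w a")
    case True
    then show ?thesis using decode_low_bounds[OF a] dec_head_plus_shift ntrue_plus_nfalse[of w "length w"]
      by auto
  next
    case False
    then show ?thesis using decode_high_bounds[OF a] dec_head_ge_2 dec_head_plus_shift
        ntrue_plus_nfalse[of w "length w"]
      by auto
  qed
  then have "set (decode w j) \<subseteq> {1..length w + 2}" by (auto simp: in_set_conv_nth)
  moreover have "card (set (decode w j)) = length w + 2"
    using distinct_card[OF distinct_decode] by simp
  ultimately show ?thesis by (simp add: card_subset_eq)
qed

lemma decode_perms_of: "decode w j \<in> perms_of (length w + 2)"
  using distinct_decode set_decode by (simp add: perms_of_def)

context
  fixes y :: "bool list" and r :: nat
  assumes w_eq: "w = y @ replicate j True @ replicate r False" and stem: "stem y" and shift_pos: "0 < j"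
begin

lemma dec_head_minus_2: "dec_head w j - 2 = ntrue y (length y)"
  using ntrue_stem_block[of y j r] w_eq by (simp add: dec_head_def add.assoc)

lemma nth_in_block: "length y \<le> k \<Longrightarrow> k < length y + j \<Longrightarrow> w!k"
  using w_eq by (simp add: nth_append)

lemma above_head_in_block:
  assumes "k < length w" "w!k" "\<not> ntrue w k < dec_head w j - 2"
  shows "length y \<le> k \<and> k < length y + j"
proof
  show "length y \<le> k"
  proof (rule ccontr)
    assume "\<not> length y \<le> k"
    then have "ntrue w k < ntrue w (length y)" using ntrue_less assms(2) by simp
    also have "\<dots> = ntrue y (length y)" using w_eq ntrue_append_left[of "length y" y] by simp
    finally show False using assms(3) dec_head_minus_2 by simp
  qed
  show "k < length y + j"
    using assms(1,2) w_eq by (cases "k < length y") (auto simp: nth_append split: if_splits)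
qed

lemma first_false_in_stem:
  obtains f where "f < length y" "\<not> w!f" "Suc f < length w" "w!(Suc f)"
    "\<And>k. k < length w \<Longrightarrow> \<not> w!k \<Longrightarrow> nfalse w k = 0 \<Longrightarrow> k = f"
proof -
  obtain f where f: "f < length y" "\<not> y!f" "\<forall>k<f. y!k" "Suc f = length y \<or> y!(Suc f)"
    using stem unfolding stem_def by blast
  have "\<not> w!f" using f w_eq by (simp add: nth_append)
  moreover have "Suc f < length w" "w!(Suc f)"
    using f(1,4) w_eq shift_pos by (auto simp: nth_append)
  moreover have "k = f" if "k < length w" "\<not> w!k" "nfalse w k = 0" for k
  proof -
    have "\<not> f < k" using nfalse_eq_0_nth[OF that(3)] \<open>\<not> w!f\<close> by blast
    moreover have "\<not> k < f" using f(1,3) that(2) w_eq by (auto simp: nth_append)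
    ultimately show ?thesis by simp
  qed
  ultimately show ?thesis using that f(1) by blast
qed

end

lemma valid_code_shift_pos:
  "0 < j \<Longrightarrow> \<exists>y r. stem y \<and> w = y @ replicate j True @ replicate r False"
  using valid unfolding valid_code_def by auto

lemma fishburn_decode: "fishburn (decode w j)"
  unfolding fishburn_def
proof clarify
  fix i q assume h: "i < q" "q < length (decode w j)" "i + 1 < length (decode w j)"
    "decode w j ! q < decode w j ! i" "decode w j ! i < decode w j ! (i + 1)"
    "decode w j ! i = decode w j ! q + 1"
  have q: "q < length w + 2" using h(2) by simp
  have high_i: "\<not> low_pos w i" using decode_low_less[OF h(1) q] h(4) by auto
  have low_q: "low_pos w q" using decode_high_less[OF h(1) q high_i] h(4) by auto
  have "i \<noteq> 0" using h(5) dec_head_ge_2 by (cases i) auto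
  have "i < length w + 2" using h(1) q by simp
  then obtain i' where i': "i = Suc (Suc i')" "i' < length w" "\<not> w!i'"
    using high_i \<open>i \<noteq> 0\<close> by (cases rule: less_Suc_Suc_cases) (auto simp: low_pos_def)
  have "decode w j ! q \<le> dec_head w j + j" "decode w j ! q \<noteq> dec_head w j"
    using decode_low_bounds[OF q low_q] by auto
  then have i_val: "dec_entry w j i' = dec_head w j + j + 1"
    using dec_entry_false_bounds[OF i'(2,3)] h(6) i' by auto
  then have "nfalse w i' = 0" using i'(3) by (simp add: dec_entry_def)
  have "0 < j" using decode_low_bounds[OF q low_q] h(6) i' i_val by auto
  then obtain y r where yr: "stem y" "w = y @ replicate j True @ replicate r False"
    using valid_code_shift_pos by blast
  obtain f where f: "Suc f < length w" "w!(Suc f)"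
    "\<And>k. k < length w \<Longrightarrow> \<not> w!k \<Longrightarrow> nfalse w k = 0 \<Longrightarrow> k = f"
    using first_false_in_stem[OF yr(2,1) \<open>0 < j\<close>] by metis
  have "i' = f" using f(3) i'(2,3) \<open>nfalse w i' = 0\<close> by blast
  then have "decode w j ! (i + 1) \<le> dec_head w j + j"
    using dec_entry_true_bounds[OF f(1,2)] f(1) i'(1) by simp
  then show False using h(5) i' i_val by simp
qed

lemma decode_not_has_21354: "\<not> has_21354 (decode w j)"
proof
  assume "has_21354 (decode w j)"
  then obtain a b c d e where h: "a < b" "b < c" "c < d" "d < e" "e < length w + 2"
      "decode w j ! b < decode w j ! a" "decode w j ! a < decode w j ! c"
      "decode w j ! c < decode w j ! e" "decode w j ! e < decode w j ! d"
    unfolding has_21354_def by auto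
  have "\<not> low_pos w a" using decode_low_less[OF h(1)] h by fastforce
  have high_d: "\<not> low_pos w d" using decode_low_less[OF h(4,5)] h(9) by auto
  have low_e: "low_pos w e" using decode_high_less[OF h(4,5) high_d] h(9) by auto
  have e_le: "decode w j ! e \<le> dec_head w j + j" using decode_low_bounds[OF h(5) low_e] by simp
  have "a = 0"
    using decode_high_bounds[OF _ \<open>\<not> low_pos w a\<close>] h e_le by fastforce
  then have above_head: "dec_head w j < decode w j ! x" if "x \<in> {c, e}" for x
    using h that by auto
  obtain e' where e': "e = Suc (Suc e')" "e' < length w" "w!e'"
    using h(5) low_e h(1-4) by (cases rule: less_Suc_Suc_cases) (auto simp: low_pos_def)
  have "\<not> ntrue w e' < dec_head w j - 2"
    using dec_entry_below_head[OF e'(3)] above_head[of e] e' by auto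
  moreover have "0 < j" using dec_entry_above_head[OF e'(2,3) calculation] by simp
  ultimately obtain y r where yr: "stem y" "w = y @ replicate j True @ replicate r False"
    and e'_block: "e' < length y + j"
    using valid_code_shift_pos above_head_in_block[OF _ _ _ e'(2,3)] by blast
  have "c < length w + 2" "d < length w + 2" using h(3-5) by simp_all
  obtain c' where c': "c = Suc (Suc c')" "c' < length w"
    using \<open>c < length w + 2\<close> h(1,2) by (cases rule: less_Suc_Suc_cases) auto
  have "w!c'"
    using dec_entry_false_bounds[OF c'(2)] c' h(8) e_le by (cases "w!c'") auto
  then have "\<not> ntrue w c' < dec_head w j - 2"
    using dec_entry_below_head above_head[of c] c' by auto
  then have "length y \<le> c'"
    using above_head_in_block[OF yr(2,1) \<open>0 < j\<close> c'(2) \<open>w!c'\<close>] by simp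
  obtain d' where d': "d = Suc (Suc d')" "\<not> w!d'"
    using \<open>d < length w + 2\<close> h(1-3) high_d by (cases rule: less_Suc_Suc_cases) (auto simp: low_pos_def)
  then show False
    using nth_in_block[OF yr(2,1) \<open>0 < j\<close>, of d'] \<open>length y \<le> c'\<close> e'_block c' e' h(3,4) by simp
qed

lemma admissible_decode: "admissible (length w + 2) (decode w j)"
  unfolding admissible_def
  using decode_perms_of fishburn_decode decode_not_has_321 decode_not_has_21354
  by simp

lemma decode_head_ne_1: "decode w j ! 0 \<noteq> 1"
  using dec_head_ge_2 by simp

lemma ltr_max_decode: "k < length w \<Longrightarrow> ltr_max (decode w j) (k + 2) \<longleftrightarrow> \<not> w!k"
proof
  assume k: "k < length w" and "ltr_max (decode w j) (k + 2)"
  show "\<not> w!k"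
  proof
    assume true_k: "w!k"
    show False
    proof (cases "ntrue w k < dec_head w j - 2")
      case True
      then have "decode w j ! (k+2) < decode w j ! 0"
        using dec_entry_below_head[OF true_k] k by simp
      then show False using \<open>ltr_max (decode w j) (k + 2)\<close> unfolding ltr_max_def by auto
    next
      case False
      then have above: "dec_head w j < dec_entry w j k" "dec_entry w j k \<le> dec_head w j + j"
        using dec_entry_above_head[OF k true_k] by auto
      then have "0 < j" by simp
      then obtain y r where yr: "stem y" "w = y @ replicate j True @ replicate r False"
        using valid_code_shift_pos by blast
      obtain f where f: "f < length y" "\<not> w!f" using first_false_in_stem[OF yr(2,1) \<open>0 < j\<close>] by metis
      have "length y \<le> k" using above_head_in_block[OF yr(2,1) _ k true_k False] above by simp
      then have "f < length w" using f k by simp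
      then have "decode w j ! (k+2) < decode w j ! (f+2)"
        using dec_entry_false_bounds[OF _ f(2)] above k by fastforce
      then show False using \<open>ltr_max (decode w j) (k + 2)\<close> f \<open>length y \<le> k\<close>
        unfolding ltr_max_def by (meson add_less_mono1 less_le_trans not_less_iff_gr_or_eq)
    qed
  qed
next
  assume k: "k < length w" and "\<not> w!k"
  then have high: "\<not> low_pos w (k+2)" by simp
  have "decode w j ! i < decode w j ! (k+2)" if "i < k + 2" for i
    using decode_low_less[OF that] decode_high_less[OF that _ _ high] k
    by (cases "low_pos w i") auto
  then show "ltr_max (decode w j) (k + 2)" unfolding ltr_max_def by blast
qed

lemma code_word_decode: "code_word (decode w j) = w"
  by (rule nth_equalityI) (auto simp: code_word_def ltr_max_decode[simplified])

lemma code_shift_decode: "code_shift (decode w j) = j"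
proof (cases "\<exists>k<length w. \<not> w!k")
  case True
  then obtain k0 where k0: "k0 < length w" "\<not> w!k0" by blast
  have max_k0: "ltr_max (decode w j) (k0 + 2)" using k0 ltr_max_decode by simp
  then have late: "has_late_ltr_max (decode w j)"
    unfolding has_late_ltr_max_def using k0 by auto
  define g where "g = first_ltr_max (decode w j)"
  have g_le: "g \<le> k0" unfolding g_def first_ltr_max_def using max_k0 by (rule Least_le)
  have "ltr_max (decode w j) (g + 2)" unfolding g_def first_ltr_max_def using max_k0 by (rule LeastI)
  then have "\<not> w!g" using g_le k0 ltr_max_decode[of g] by simp
  moreover have "nfalse w g = 0"
  proof -
    have "w!i" if "i < g" for i
    proof -
      have "\<not> ltr_max (decode w j) (i + 2)"
        using that unfolding g_def first_ltr_max_def by (rule not_less_Least)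
      then show ?thesis using that g_le k0 ltr_max_decode[of i] by simp
    qed
    then have "{i. i < g \<and> \<not> w!i} = {}" by blast
    then show ?thesis by (simp add: nfalse_def)
  qed
  ultimately have "decode w j ! (g + 2) = dec_head w j + j + 1"
    using g_le k0 by (simp add: dec_entry_def)
  then show ?thesis using late unfolding code_shift_def g_def[symmetric] by simp
next
  case False
  have "j = 0"
  proof (rule ccontr)
    assume "j \<noteq> 0"
    then obtain y r where yr: "stem y" "w = y @ replicate j True @ replicate r False"
      using valid_code_shift_pos by blast
    have "0 < j" using \<open>j \<noteq> 0\<close> by simp
    obtain f where "f < length y" "\<not> w!f"
      using first_false_in_stem[OF yr(2,1) \<open>0 < j\<close>] by metis
    then show False using False yr(2) by simp
  qed
  moreover have "\<not> has_late_ltr_max (decode w j)"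
    using False ltr_max_decode unfolding has_late_ltr_max_def by simp
  ultimately show ?thesis unfolding code_shift_def by simp
qed

end

section \<open>Encoding permutations as words\<close>

lemma card_less_image_strict_mono_on:
  fixes f :: "'a::linorder \<Rightarrow> 'b::linorder"
  assumes "strict_mono_on I f" "k \<in> I"
  shows "card {x \<in> f ` I. x < f k} = card {i \<in> I. i < k}"
proof -
  have "{x \<in> f ` I. x < f k} = f ` {i \<in> I. i < k}"
    using strict_mono_on_less[OF assms(1) _ assms(2)] by auto
  moreover have "inj_on f {i \<in> I. i < k}"
    using strict_mono_on_imp_inj_on[OF assms(1)] by (rule inj_on_subset) auto
  ultimately show ?thesis by (simp add: card_image)
qed

lemma card_less_interval_minus:
  assumes "2 \<le> v" "v \<le> M" "v \<noteq> m" "2 \<le> m"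
  shows "card {x \<in> {2..M} - {m}. x < v} = (if v < m then v - 2 else v - 3)"
proof (cases "v < m")
  case True
  then have "{x \<in> {2..M} - {m}. x < v} = {2..<v}" using assms by auto
  then show ?thesis using True by simp
next
  case False
  then have "{x \<in> {2..M} - {m}. x < v} = {2..<v} - {m}" using assms by auto
  then show ?thesis using False assms by (simp add: card_Diff_singleton)
qed

context
  fixes p :: "nat list" and n :: nat
  assumes adm: "admissible n p" and head_ne_1: "p!0 \<noteq> 1" and n_ge_2: "2 \<le> n"
begin

lemma distinct_p: "distinct p" and set_p: "set p = {1..n}"
  using adm by (auto simp: admissible_def perms_of_def)

lemma length_p: "length p = n"
  using distinct_card[OF distinct_p] set_p by simp

lemma nth_p_range: "a < n \<Longrightarrow> 1 \<le> p!a \<and> p!a \<le> n"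
  using set_p length_p nth_mem by fastforce

lemma nth_p_surj: "1 \<le> v \<Longrightarrow> v \<le> n \<Longrightarrow> \<exists>a<n. p!a = v"
  using set_p length_p by (metis atLeastAtMost_iff in_set_conv_nth)

lemma nth_p_eq_iff: "a < n \<Longrightarrow> b < n \<Longrightarrow> p!a = p!b \<longleftrightarrow> a = b"
  using distinct_p length_p nth_eq_iff_index_eq by blast

lemma head_ge_2: "2 \<le> p!0"
  using nth_p_range[of 0] n_ge_2 head_ne_1 by fastforce

text \<open>The entry \<open>1\<close> cannot come later: it would form a \<open>321\<close> with the first two entries, or the
  value \<open>p!0 - 1\<close>, lying to the right, would violate the Fishburn condition at position \<open>0\<close>.\<close>

lemma second_entry_eq_1: "p!1 = 1"
proof (rule ccontr)
  assume ne_1: "p!1 \<noteq> 1"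
  then have second_ge_2: "2 \<le> p!1" using nth_p_range[of 1] n_ge_2 by fastforce
  show False
  proof (cases "p!1 < p!0")
    case True
    obtain k where k: "k < n" "p!k = 1" using nth_p_surj[of 1] n_ge_2 by auto
    have "k \<noteq> 0" using k(2) head_ne_1 by (cases k) auto
    moreover have "k \<noteq> 1" using k(2) ne_1 by auto
    ultimately have "2 \<le> k" by simp
    then have "has_321 p"
      unfolding has_321_def using True k second_ge_2 length_p
      by (intro exI[of _ 0] exI[of _ 1] exI[of _ k]) auto
    then show False using adm by (simp add: admissible_def)
  next
    case False
    moreover have "p!0 \<noteq> p!1" using nth_p_eq_iff[of 0 1] n_ge_2 by simp
    ultimately have head_less: "p!0 < p!1" by simp
    have "1 \<le> p!0 - 1" "p!0 - 1 \<le> n" using head_ge_2 nth_p_range[of 0] n_ge_2 by auto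
    then obtain q where q: "q < n" "p!q = p!0 - 1" using nth_p_surj by blast
    then have "0 < q" using head_ge_2 by (cases q) auto
    then have "0 < q \<and> q < length p \<and> 0 + 1 < length p \<and> p!q < p!0 \<and> p!0 < p!(0 + 1) \<and> p!0 = p!q + 1"
      using q head_less head_ge_2 length_p n_ge_2 by auto
    then have "\<not> fishburn p" unfolding fishburn_def by blast
    then show False using adm by (simp add: admissible_def)
  qed
qed

lemma non_ltr_max_larger_before: "a < n \<Longrightarrow> \<not> ltr_max p a \<Longrightarrow> \<exists>d<a. p!a < p!d"
  unfolding ltr_max_def using nth_p_eq_iff by (metis less_trans not_less_iff_gr_or_eq)

lemma non_ltr_max_less_later:
  assumes "a < b" "b < n" "\<not> ltr_max p a"
  shows "p!a < p!b"
proof (rule ccontr)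
  assume "\<not> p!a < p!b"
  then have "p!b < p!a" using nth_p_eq_iff[of a b] assms by fastforce
  moreover obtain d where "d < a" "p!a < p!d" using non_ltr_max_larger_before[of a] assms by auto
  ultimately have "has_321 p"
    unfolding has_321_def using assms length_p by (intro exI[of _ d] exI[of _ a] exI[of _ b]) auto
  then show False using adm by (simp add: admissible_def)
qed

lemma less_head_before_ltr_max:
  "k < n - 2 \<Longrightarrow> \<forall>k'\<le>k. \<not> ltr_max p (k' + 2) \<Longrightarrow> p!(k+2) < p!0"
proof (induction k rule: less_induct)
  case (less k)
  have "k + 2 < n" using less.prems by simp
  then obtain d where d: "d < k + 2" "p!(k+2) < p!d"
    using non_ltr_max_larger_before[of "k+2"] less.prems by auto
  show ?case
  proof (cases "d < 2")
    case True
    then show ?thesis using d second_entry_eq_1 nth_p_range[of "k+2"] \<open>k + 2 < n\<close> by (cases d) auto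
  next
    case False
    then obtain d' where "d = d' + 2" by (metis add.commute le_add_diff_inverse not_less)
    then have "p!d < p!0" using less.IH[of d'] d less.prems by simp
    then show ?thesis using d by simp
  qed
qed

lemma first_ltr_max_spec:
  assumes "has_late_ltr_max p"
  shows "first_ltr_max p < n - 2" "ltr_max p (first_ltr_max p + 2)"
    "k < first_ltr_max p \<Longrightarrow> \<not> ltr_max p (k + 2)"
proof -
  obtain k0 where k0: "k0 < n - 2" "ltr_max p (k0 + 2)"
    using assms unfolding has_late_ltr_max_def length_p by blast
  show "ltr_max p (first_ltr_max p + 2)" unfolding first_ltr_max_def using k0(2) by (rule LeastI)
  show "first_ltr_max p < n - 2"
    using Least_le[of "\<lambda>k. ltr_max p (k + 2)", OF k0(2)] k0(1) unfolding first_ltr_max_def by simp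
  show "\<not> ltr_max p (k + 2)" if "k < first_ltr_max p"
    using that unfolding first_ltr_max_def by (rule not_less_Least)
qed

lemma first_ltr_max_le:
  assumes "k < n - 2" "p!0 < p!(k+2)"
  shows "has_late_ltr_max p" "first_ltr_max p \<le> k"
proof -
  obtain k' where k': "k' \<le> k" "ltr_max p (k' + 2)"
    using less_head_before_ltr_max[OF assms(1)] assms(2) by fastforce
  then show "has_late_ltr_max p"
    unfolding has_late_ltr_max_def length_p using assms(1) by (intro exI[of _ k']) auto
  have "first_ltr_max p \<le> k'" unfolding first_ltr_max_def using k'(2) by (rule Least_le)
  then show "first_ltr_max p \<le> k" using k'(1) by simp
qed

lemma first_ltr_max_value:
  assumes "has_late_ltr_max p"
  shows "p!(first_ltr_max p + 2) = p!0 + code_shift p + 1"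
  using ltr_max_less[OF _ first_ltr_max_spec(2)[OF assms], of 0] assms unfolding code_shift_def by simp

lemma ltr_max_value_ge: "k < n - 2 \<Longrightarrow> ltr_max p (k+2) \<Longrightarrow> p!0 + code_shift p + 1 \<le> p!(k+2)"
  using ltr_max_less[of 0 "k+2" p] first_ltr_max_le[of k] first_ltr_max_value
    ltr_max_less[of "first_ltr_max p + 2" "k + 2" p]
  by (cases "first_ltr_max p = k") (auto simp: le_less)

text \<open>A non-maximum above \<open>p!0 + code_shift p\<close> would exceed the value at the first late maximum and
  lie below an earlier entry, and together with the first two entries this is a \<open>21354\<close>.\<close>

lemma non_ltr_max_le: "k < n - 2 \<Longrightarrow> \<not> ltr_max p (k+2) \<Longrightarrow> p!(k+2) \<le> p!0 + code_shift p"
proof (rule ccontr)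
  let ?f = "first_ltr_max p"
  assume k: "k < n - 2" "\<not> ltr_max p (k+2)" and "\<not> p!(k+2) \<le> p!0 + code_shift p"
  then have late: "has_late_ltr_max p" "?f \<le> k" using first_ltr_max_le[of k] by auto
  have "?f \<noteq> k" using first_ltr_max_spec(2)[OF late(1)] k(2) by auto
  then have above_f: "p!(?f+2) < p!(k+2)"
    using first_ltr_max_value[OF late(1)] \<open>\<not> p!(k+2) \<le> p!0 + code_shift p\<close> late(2)
      nth_p_eq_iff[of "?f+2" "k+2"] k(1) by fastforce
  have "k + 2 < n" using k(1) by simp
  then obtain e where e: "e < k + 2" "p!(k+2) < p!e" using non_ltr_max_larger_before[of "k+2"] k by auto
  have head_less_f: "p!0 < p!(?f+2)" using first_ltr_max_value[OF late(1)] by simp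
  have "2 \<le> e" using e above_f head_less_f second_entry_eq_1 by (cases e rule: less_Suc_Suc_cases) auto
  then have "e - 2 + 2 = e" by simp
  then have "e - 2 < n - 2" "p!0 < p!(e - 2 + 2)" using e k(1) above_f head_less_f by auto
  then have "?f \<le> e - 2" by (rule first_ltr_max_le(2))
  moreover have "e \<noteq> ?f + 2" using e above_f by auto
  ultimately have "has_21354 p"
    unfolding has_21354_def using e above_f head_less_f second_entry_eq_1 head_ge_2 k(1) length_p \<open>2 \<le> e\<close>
    by (intro exI[of _ 0] exI[of _ 1] exI[of _ "?f+2"] exI[of _ e] exI[of _ "k+2"]) auto
  then show False using adm by (simp add: admissible_def)
qed

lemma length_code_word: "length (code_word p) = n - 2"
  by (simp add: code_word_def length_p)

lemma code_word_nth: "k < n - 2 \<Longrightarrow> code_word p ! k \<longleftrightarrow> \<not> ltr_max p (k+2)"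
  by (simp add: code_word_def length_p)

lemma code_word_iff_le: "k < n - 2 \<Longrightarrow> code_word p ! k \<longleftrightarrow> p!(k+2) \<le> p!0 + code_shift p"
  using code_word_nth[of k] non_ltr_max_le[of k] ltr_max_value_ge[of k] by auto

lemma tail_value_range: "k < n - 2 \<Longrightarrow> 2 \<le> p!(k+2) \<and> p!(k+2) \<le> n \<and> p!(k+2) \<noteq> p!0"
  using nth_p_range[of "k+2"] nth_p_eq_iff[of "k+2" 0] nth_p_eq_iff[of "k+2" 1] second_entry_eq_1
  by fastforce

lemma tail_value_surj:
  assumes "2 \<le> x" "x \<le> n" "x \<noteq> p!0"
  obtains k where "k < n - 2" "p!(k+2) = x"
proof -
  obtain a where a: "a < n" "p!a = x" using nth_p_surj[of x] assms by auto
  have "a \<noteq> 0" using a assms(3) by (cases a) auto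
  moreover have "a \<noteq> 1" using a assms(1) second_entry_eq_1 by auto
  ultimately obtain k where "a = Suc (Suc k)" by (metis One_nat_def not0_implies_Suc)
  then show ?thesis using a that[of k] by simp
qed

lemma non_ltr_max_values:
  "(\<lambda>k. p!(k+2)) ` {k. k < n - 2 \<and> code_word p ! k} = {2..p!0 + code_shift p} - {p!0}"
proof (intro equalityI subsetI)
  fix x assume "x \<in> {2..p!0 + code_shift p} - {p!0}"
  moreover have "p!0 + code_shift p \<le> n"
    using tail_value_range[OF first_ltr_max_spec(1)] first_ltr_max_value nth_p_range[of 0] n_ge_2
    by (cases "has_late_ltr_max p") (auto simp: code_shift_def)
  ultimately show "x \<in> (\<lambda>k. p!(k+2)) ` {k. k < n - 2 \<and> code_word p ! k}"
    using code_word_iff_le by (auto elim!: tail_value_surj)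
qed (use code_word_iff_le tail_value_range in auto)

lemma ltr_max_values:
  "(\<lambda>k. p!(k+2)) ` {k. k < n - 2 \<and> \<not> code_word p ! k} = {p!0 + code_shift p + 1..n}"
proof (intro equalityI subsetI)
  fix x assume x: "x \<in> {p!0 + code_shift p + 1..n}"
  then have "2 \<le> x" "x \<le> n" "x \<noteq> p!0" using head_ge_2 by auto
  then obtain k where "k < n - 2" "p!(k+2) = x" by (rule tail_value_surj)
  then show "x \<in> (\<lambda>k. p!(k+2)) ` {k. k < n - 2 \<and> \<not> code_word p ! k}"
    using code_word_iff_le x by force
qed (use code_word_iff_le tail_value_range in auto)

lemma strict_mono_on_non_ltr_max: "strict_mono_on {k. k < n - 2 \<and> code_word p ! k} (\<lambda>k. p!(k+2))"
  by (rule strict_mono_onI) (auto simp: code_word_nth intro: non_ltr_max_less_later)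

lemma strict_mono_on_ltr_max: "strict_mono_on {k. k < n - 2 \<and> \<not> code_word p ! k} (\<lambda>k. p!(k+2))"
  by (rule strict_mono_onI) (auto simp: code_word_nth intro: ltr_max_less)

lemma dec_head_code_word: "dec_head (code_word p) (code_shift p) = p!0"
proof -
  have "ntrue (code_word p) (n - 2) = card ((\<lambda>k. p!(k+2)) ` {k. k < n - 2 \<and> code_word p ! k})"
    unfolding ntrue_def using strict_mono_on_imp_inj_on[OF strict_mono_on_non_ltr_max]
    by (simp add: card_image)
  also have "\<dots> = p!0 + code_shift p - 2"
    unfolding non_ltr_max_values using head_ge_2 by (simp add: card_Diff_singleton)
  finally show ?thesis using head_ge_2 unfolding dec_head_def length_code_word by simp
qed

lemma dec_entry_code_word: "k < n - 2 \<Longrightarrow> dec_entry (code_word p) (code_shift p) k = p!(k+2)"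
proof (cases "code_word p ! k")
  case True
  assume k: "k < n - 2"
  let ?I = "{k. k < n - 2 \<and> code_word p ! k}"
  have "ntrue (code_word p) k = card {i \<in> ?I. i < k}"
    unfolding ntrue_def using k by (intro arg_cong[where f = card]) auto
  also have "\<dots> = card {x \<in> {2..p!0 + code_shift p} - {p!0}. x < p!(k+2)}"
    using card_less_image_strict_mono_on[OF strict_mono_on_non_ltr_max, of k] k True
    unfolding non_ltr_max_values by simp
  also have "\<dots> = (if p!(k+2) < p!0 then p!(k+2) - 2 else p!(k+2) - 3)"
    using card_less_interval_minus tail_value_range[OF k] code_word_iff_le[OF k] True head_ge_2
    by simp
  finally show ?thesis
    using True tail_value_range[OF k] dec_head_code_word head_ge_2 by (auto simp: dec_entry_def)
next
  case False
  assume k: "k < n - 2"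
  let ?I = "{k. k < n - 2 \<and> \<not> code_word p ! k}"
  have "nfalse (code_word p) k = card {i \<in> ?I. i < k}"
    unfolding nfalse_def using k by (intro arg_cong[where f = card]) auto
  also have "\<dots> = card {x \<in> {p!0 + code_shift p + 1..n}. x < p!(k+2)}"
    using card_less_image_strict_mono_on[OF strict_mono_on_ltr_max, of k] k False
    unfolding ltr_max_values by simp
  also have "{x \<in> {p!0 + code_shift p + 1..n}. x < p!(k+2)} = {p!0 + code_shift p + 1..<p!(k+2)}"
    using tail_value_range[OF k] by auto
  finally show ?thesis
    using False code_word_iff_le[OF k] dec_head_code_word by (simp add: dec_entry_def)
qed

lemma decode_code_word: "decode (code_word p) (code_shift p) = p"
proof (rule nth_equalityI)
  show "length (decode (code_word p) (code_shift p)) = length p"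
    using length_code_word length_p n_ge_2 by simp
  fix i assume "i < length (decode (code_word p) (code_shift p))"
  then have "i < (n - 2) + 2" using length_code_word by simp
  then show "decode (code_word p) (code_shift p) ! i = p ! i"
    by (cases rule: less_Suc_Suc_cases)
      (simp_all add: dec_head_code_word second_entry_eq_1[unfolded One_nat_def] dec_entry_code_word
        length_code_word)
qed

context
  fixes q0 :: nat
  assumes shift_pos: "0 < code_shift p" and q0: "q0 < n - 2" "p!(q0+2) = p!0 + 1"
begin

lemma block_after_head_succ:
  "i < code_shift p \<Longrightarrow> q0 + i < n - 2 \<and> code_word p ! (q0+i) \<and> p!(q0+i+2) = p!0 + 1 + i"
proof (induction i)
  case 0
  then show ?case using q0 code_word_iff_le by simp
next
  case (Suc i)
  then have IH: "q0 + i < n - 2" "code_word p ! (q0+i)" "p!(q0+i+2) = p!0 + 1 + i" by auto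
  have "p!0 + 2 + i \<in> (\<lambda>k. p!(k+2)) ` {k. k < n-2 \<and> code_word p ! k}"
    using non_ltr_max_values Suc.prems by auto
  then obtain q where q: "q < n-2" "code_word p ! q" "p!(q+2) = p!0 + 2 + i" by auto
  have "\<not> q < q0 + i"
  proof
    assume "q < q0 + i"
    then have "p!(q+2) < p!(q0+i+2)"
      using non_ltr_max_less_later[of "q+2" "q0+i+2"] q(2) code_word_nth[OF q(1)] IH(1) by simp
    then show False using q IH by simp
  qed
  moreover have "q \<noteq> q0 + i" using q IH by auto
  moreover have "q = q0 + Suc i" if "q0 + Suc i < q"
  proof (cases "code_word p ! (q0 + Suc i)")
    case True
    then have "p!(q0+i+2) < p!(q0 + Suc i + 2)" "p!(q0 + Suc i + 2) < p!(q+2)"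
      using non_ltr_max_less_later[of "q0+i+2" "q0 + Suc i + 2"] non_ltr_max_less_later[of "q0 + Suc i + 2" "q+2"]
        code_word_nth[of "q0+i"] code_word_nth[of "q0 + Suc i"] IH q that True by auto
    then show ?thesis using IH q by simp
  next
    case False
    then have "p!(q+2) < p!(q0 + Suc i + 2)"
      using code_word_iff_le[of "q0 + Suc i"] q that Suc.prems by simp
    then have "has_21354 p"
      unfolding has_21354_def using q q0 that head_ge_2 second_entry_eq_1 length_p
      by (intro exI[of _ 0] exI[of _ 1] exI[of _ "q0+2"] exI[of _ "q0 + Suc i + 2"] exI[of _ "q+2"]) auto
    then show ?thesis using adm by (simp add: admissible_def)
  qed
  ultimately have "q = q0 + Suc i" by linarith
  then show ?case using q by simp
qed

lemma code_word_after_block: "q0 + code_shift p \<le> k \<Longrightarrow> k < n - 2 \<Longrightarrow> \<not> code_word p ! k"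
proof
  assume k: "q0 + code_shift p \<le> k" "k < n - 2" and "code_word p ! k"
  then have le: "p!(k+2) \<le> p!0 + code_shift p" using code_word_iff_le by blast
  have "p!0 + 1 < p!(k+2)"
    using non_ltr_max_less_later[of "q0+2" "k+2"] code_word_iff_le[of q0] k q0 shift_pos
      code_word_nth by auto
  then obtain i where i: "i < code_shift p" "p!(k+2) = p!0 + 1 + i"
    using le by (intro that[of "p!(k+2) - p!0 - 1"]) auto
  have "q0 + i + 2 < n" "k + 2 < n" using block_after_head_succ[OF i(1)] k by linarith+
  then have "q0 + i + 2 = k + 2"
    using block_after_head_succ[OF i(1)] i(2) nth_p_eq_iff[of "q0+i+2" "k+2"] by simp
  then show False using i k by simp
qed

lemma first_ltr_max_less_block: "first_ltr_max p < q0"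
proof -
  note late = has_late_ltr_max_if_shift_pos[OF shift_pos]
  have "first_ltr_max p \<le> q0" using first_ltr_max_le[OF q0(1)] q0(2) by simp
  moreover have "first_ltr_max p \<noteq> q0"
    using first_ltr_max_spec(2)[OF late] code_word_nth[OF q0(1)] code_word_iff_le[OF q0(1)] q0 shift_pos
    by auto
  ultimately show ?thesis by simp
qed

lemma code_word_after_first_ltr_max: "code_word p ! (first_ltr_max p + 1)"
proof (rule ccontr)
  let ?f = "first_ltr_max p"
  note late = has_late_ltr_max_if_shift_pos[OF shift_pos]
  note f = first_ltr_max_spec[OF late]
  assume "\<not> code_word p ! (?f + 1)"
  moreover have f1: "?f + 1 < n - 2" using first_ltr_max_less_block q0 by simp
  ultimately have "ltr_max p (?f + 3)" using code_word_nth[of "?f + 1"] by (simp add: numeral_eq_Suc)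
  then have "p!(?f+2) < p!(?f+3)" using ltr_max_less[of "?f+2" "?f+3" p] by simp
  have "p!0 + code_shift p \<in> (\<lambda>k. p!(k+2)) ` {k. k < n-2 \<and> code_word p ! k}"
    using non_ltr_max_values head_ge_2 shift_pos by auto
  then obtain q where q: "q < n-2" "code_word p ! q" "p!(q+2) = p!0 + code_shift p" by auto
  have "?f \<le> q" using first_ltr_max_le[OF q(1)] q(3) shift_pos by simp
  moreover have "q \<noteq> ?f" "q \<noteq> ?f + 1"
    using f q(2) code_word_nth[OF q(1)] \<open>ltr_max p (?f + 3)\<close> by (auto simp: numeral_eq_Suc)
  ultimately have "?f + 2 < q + 2 \<and> q + 2 < length p \<and> ?f + 2 + 1 < length p \<and> p!(q+2) < p!(?f+2) \<and>
      p!(?f+2) < p!(?f+2+1) \<and> p!(?f+2) = p!(q+2) + 1"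
    using q first_ltr_max_value[OF late] length_p f1 \<open>p!(?f+2) < p!(?f+3)\<close>
    by (auto simp: numeral_eq_Suc)
  then show False using adm unfolding admissible_def fishburn_def by blast
qed

lemma code_word_eq_stem_block:
  "code_word p = take q0 (code_word p) @ replicate (code_shift p) True @ replicate (n - 2 - q0 - code_shift p) False"
proof (rule nth_equalityI)
  have "code_shift p - 1 < code_shift p" using shift_pos by simp
  from conjunct1[OF block_after_head_succ[OF this]] have "q0 + code_shift p \<le> n - 2"
    using shift_pos by linarith
  then show "length (code_word p) =
      length (take q0 (code_word p) @ replicate (code_shift p) True @ replicate (n - 2 - q0 - code_shift p) False)"
    using length_code_word q0 by simp
next
  fix k assume "k < length (code_word p)"
  then have k: "k < n - 2" using length_code_word by simp
  consider "k < q0" | "q0 \<le> k" "k < q0 + code_shift p" | "q0 + code_shift p \<le> k" by linarith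
  then show "code_word p ! k =
      (take q0 (code_word p) @ replicate (code_shift p) True @ replicate (n - 2 - q0 - code_shift p) False) ! k"
  proof cases
    case 2
    then have "k - q0 < code_shift p" by linarith
    then show ?thesis using 2 block_after_head_succ[of "k - q0"] q0 length_code_word by (simp add: nth_append)
  next
    case 3
    then show ?thesis using code_word_after_block[OF _ k] q0 length_code_word k by (simp add: nth_append)
  qed (use q0 length_code_word in \<open>simp add: nth_append\<close>)
qed

lemma stem_take_code_word: "stem (take q0 (code_word p))"
  unfolding stem_def
proof (intro exI[of _ "first_ltr_max p"] conjI allI impI)
  note f = first_ltr_max_spec[OF has_late_ltr_max_if_shift_pos[OF shift_pos]]
  show "first_ltr_max p < length (take q0 (code_word p))"
    using first_ltr_max_less_block q0 length_code_word by simp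
  show "\<not> take q0 (code_word p) ! first_ltr_max p"
    using first_ltr_max_less_block f code_word_nth by simp
  show "take q0 (code_word p) ! k" if "k < first_ltr_max p" for k
    using first_ltr_max_less_block f that code_word_nth[of k] by simp
  show "Suc (first_ltr_max p) = length (take q0 (code_word p)) \<or> take q0 (code_word p) ! Suc (first_ltr_max p)"
    using first_ltr_max_less_block code_word_after_first_ltr_max q0 length_code_word
    by (cases "Suc (first_ltr_max p) < q0") auto
qed

end

lemma valid_code_word: "valid_code (code_word p) (code_shift p)"
proof (cases "code_shift p = 0")
  case False
  then have "p!0 + 1 \<in> (\<lambda>k. p!(k+2)) ` {k. k < n-2 \<and> code_word p ! k}"
    using non_ltr_max_values head_ge_2 by auto
  then obtain q0 where "q0 < n - 2" "p!(q0+2) = p!0 + 1" by auto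
  then show ?thesis unfolding valid_code_def
    using code_word_eq_stem_block stem_take_code_word False by blast
qed (simp add: valid_code_def)

end

section \<open>Counting\<close>

definition codes :: "nat \<Rightarrow> (bool list \<times> nat) set" where
  "codes N = {(w, j). length w = N \<and> valid_code w j}"

definition adm :: "nat \<Rightarrow> nat list set" where
  "adm n = {p. admissible n p}"

definition adm_head_ne_1 :: "nat \<Rightarrow> nat list set" where
  "adm_head_ne_1 n = {p. admissible n p \<and> p!0 \<noteq> 1}"

lemma bij_betw_decode_codes: "bij_betw (\<lambda>(w, j). decode w j) (codes N) (adm_head_ne_1 (N + 2))"
proof (rule bij_betw_imageI)
  show "inj_on (\<lambda>(w, j). decode w j) (codes N)"
  proof (rule inj_onI, clarify)
    fix w j w' j' assume "(w, j) \<in> codes N" "(w', j') \<in> codes N" and eq: "decode w j = decode w' j'"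
    then have "valid_code w j" "valid_code w' j'" unfolding codes_def by auto
    then show "w = w' \<and> j = j'"
      using code_word_decode code_shift_decode eq by metis
  qed
next
  show "(\<lambda>(w, j). decode w j) ` codes N = adm_head_ne_1 (N + 2)"
  proof (intro equalityI subsetI)
    fix p assume "p \<in> (\<lambda>(w, j). decode w j) ` codes N"
    then show "p \<in> adm_head_ne_1 (N + 2)"
      using admissible_decode decode_head_ne_1 by (auto simp: codes_def adm_head_ne_1_def)
  next
    fix p assume "p \<in> adm_head_ne_1 (N + 2)"
    then have p: "admissible (N + 2) p" "p!0 \<noteq> 1" unfolding adm_head_ne_1_def by auto
    then have "(code_word p, code_shift p) \<in> codes N"
      using valid_code_word[OF p] length_code_word[OF p] by (simp add: codes_def)
    moreover have "p = decode (code_word p) (code_shift p)" using decode_code_word[OF p] by simp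
    ultimately show "p \<in> (\<lambda>(w, j). decode w j) ` codes N" by force
  qed
qed

definition stems :: "nat \<Rightarrow> bool list set" where
  "stems k = {y. length y = k \<and> stem y}"
definition shift_splits :: "nat \<Rightarrow> (nat \<times> nat) set" where
  "shift_splits M = {(j,r). 0 < j \<and> j + r = M}"

lemma not_stem_Nil: "\<not> stem []" by (simp add: stem_def)

lemma stem_Cons_True: "stem (True # y) \<longleftrightarrow> stem y"
proof
  assume "stem (True # y)"
  then obtain f where f: "f < length (True # y)" "\<not> (True#y)!f" "\<forall>k<f. (True#y)!k"
      "Suc f = length (True#y) \<or> (True#y)!(Suc f)" unfolding stem_def by blast
  have "f \<noteq> 0" using f(2) by (cases f) auto
  then obtain g where g: "f = Suc g" by (cases f) auto
  show "stem y" unfolding stem_def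
  proof (intro exI[of _ g] conjI allI impI)
    show "g < length y" using f(1) g by simp
    show "\<not> y!g" using f(2) g by simp
    show "y!k" if "k < g" for k using f(3)[rule_format, of "Suc k"] that g by simp
    show "Suc g = length y \<or> y!(Suc g)" using f(4) g by simp
  qed
next
  assume "stem y"
  then obtain f where f: "f < length y" "\<not> y!f" "\<forall>k<f. y!k" "Suc f = length y \<or> y!(Suc f)"
    unfolding stem_def by blast
  show "stem (True # y)" unfolding stem_def
  proof (intro exI[of _ "Suc f"] conjI allI impI)
    show "Suc f < length (True # y)" using f by simp
    show "\<not> (True#y)!(Suc f)" using f by simp
    show "(True#y)!k" if "k < Suc f" for k using f(3) that by (cases k) auto
    show "Suc (Suc f) = length (True#y) \<or> (True#y)!(Suc (Suc f))" using f(4) by simp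
  qed
qed

lemma stem_Cons_False: "stem (False # y) \<longleftrightarrow> (y = [] \<or> y!0)"
proof
  assume "stem (False # y)"
  then obtain f where f: "f < length (False # y)" "\<not> (False#y)!f" "\<forall>k<f. (False#y)!k"
      "Suc f = length (False#y) \<or> (False#y)!(Suc f)" unfolding stem_def by blast
  have "f = 0" using f(3) by (cases f) auto
  then show "y = [] \<or> y!0" using f(4) by auto
next
  assume a: "y = [] \<or> y!0"
  show "stem (False # y)" unfolding stem_def
    by (rule exI[of _ 0]) (use a in auto)
qed

lemma stems_0: "stems 0 = {}" by (simp add: stems_def not_stem_Nil)
lemma stems_1: "stems 1 = {[False]}"
proof (intro equalityI subsetI)
  fix y assume "y \<in> stems 1"
  then have y: "length y = 1" "stem y" unfolding stems_def by auto
  then obtain a where a: "y = [a]" by (metis One_nat_def length_0_conv length_Suc_conv)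
  have "a = False" using y(2) a stem_Cons_True[of "[]"] not_stem_Nil by (cases a) auto
  then show "y \<in> {[False]}" using a by simp
next
  fix y assume "y \<in> {[False]}"
  then show "y \<in> stems 1" unfolding stems_def using stem_Cons_False[of "[]"] by simp
qed

lemma stems_Suc_Suc:
  "stems (Suc (Suc k)) = Cons True ` stems (Suc k) \<union> (\<lambda>v. False # True # v) ` {v. length v = k}"
proof (intro equalityI subsetI)
  fix y assume "y \<in> stems (Suc (Suc k))"
  then have y: "length y = Suc (Suc k)" "stem y" unfolding stems_def by auto
  then obtain a y' where a: "y = a # y'" "length y' = Suc k" by (cases y) auto
  show "y \<in> Cons True ` stems (Suc k) \<union> (\<lambda>v. False # True # v) ` {v. length v = k}"
  proof (cases a)
    case True
    then have "y' \<in> stems (Suc k)" using y a stem_Cons_True unfolding stems_def by auto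
    then show ?thesis using a True by blast
  next
    case False
    then have "stem (False # y')" using y(2) a(1) by simp
    then have "y'!0" using a(2) stem_Cons_False by auto
    moreover obtain b v where "y' = b # v" "length v = k" using a(2) by (cases y') auto
    ultimately show ?thesis using a False by auto
  qed
next
  fix y assume "y \<in> Cons True ` stems (Suc k) \<union> (\<lambda>v. False # True # v) ` {v. length v = k}"
  then show "y \<in> stems (Suc (Suc k))" by (auto simp: stems_def stem_Cons_True stem_Cons_False)
qed

lemma card_bool_lists: "card {v::bool list. length v = k} = 2^k"
  using card_lists_length_eq[of "UNIV :: bool set" k] by simp

lemma finite_bool_lists: "finite {v::bool list. length v = k}"
  using finite_lists_length_eq[of "UNIV :: bool set" k] by simp

lemma finite_stems: "finite (stems k)"
  by (rule finite_subset[OF _ finite_bool_lists[of k]]) (auto simp: stems_def)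

lemma card_stems_Suc: "card (stems (Suc k)) = 2^k"
proof (induction k)
  case 0 then show ?case by (simp add: stems_1[unfolded One_nat_def])
next
  case (Suc k)
  have d: "Cons True ` stems (Suc k) \<inter> (\<lambda>v. False # True # v) ` {v. length v = k} = {}" by auto
  have "card (stems (Suc (Suc k))) =
      card (Cons True ` stems (Suc k)) + card ((\<lambda>v. False # True # v) ` {v. length v = k})"
    unfolding stems_Suc_Suc by (rule card_Un_disjoint) (use d finite_stems finite_bool_lists in auto)
  also have "card (Cons True ` stems (Suc k)) = card (stems (Suc k))" by (rule card_image) (simp add: inj_on_def)
  also have "card ((\<lambda>v. False # True # v) ` {v. length v = k}) = card {v::bool list. length v = k}"
    by (rule card_image) (simp add: inj_on_def)
  finally show ?case using Suc card_bool_lists by simp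
qed

lemma card_stems: "card (stems k) = (if k = 0 then 0 else 2^(k-1))"
  using card_stems_Suc[of "k-1"] stems_0 by (cases k) auto

lemma shift_splits_eq: "shift_splits M = (\<lambda>j. (j, M - j)) ` {1..M}"
  unfolding shift_splits_def by (auto simp: image_iff)

lemma card_shift_splits: "card (shift_splits M) = M"
proof -
  have "card ((\<lambda>j. (j, M - j)) ` {1..M}) = card {1..M}" by (rule card_image) (simp add: inj_on_def)
  then show ?thesis using shift_splits_eq by simp
qed

lemma finite_shift_splits: "finite (shift_splits M)" using shift_splits_eq by simp

lemma sum_card_stems: "(\<Sum>k<Suc N. card (stems k)) + 1 = 2^N"
  by (induction N) (auto simp: card_stems)

lemma sum_card_stems_weighted: "(\<Sum>k<N. card (stems k) * (N - k)) + N + 1 = 2^N"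
proof (induction N)
  case (Suc N)
  have "(\<Sum>k<Suc N. card (stems k) * (Suc N - k)) =
      (\<Sum>k<N. card (stems k) * (N - k) + card (stems k)) + card (stems N)"
    by (simp add: Suc_diff_le ac_simps)
  also have "\<dots> = (\<Sum>k<N. card (stems k) * (N - k)) + (\<Sum>k<Suc N. card (stems k))"
    by (simp add: sum.distrib)
  finally show ?case using Suc sum_card_stems[of N] by simp
qed simp

lemma stem_block_inj:
  assumes e: "y @ replicate j True @ replicate r False = y' @ replicate j True @ replicate r' False" and j: "0 < j"
  shows "y = y' \<and> r = r'"
proof -
  have "rev (y @ replicate j True @ replicate r False) = rev (y' @ replicate j True @ replicate r' False)"
    using e by simp
  then have e2: "replicate r False @ replicate j True @ rev y = replicate r' False @ replicate j True @ rev y'"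
    by simp
  have tw0: "takeWhile Not (replicate r False @ True # zs) = replicate r False" for r zs
    by (induction r) auto
  have rj: "replicate j True = True # replicate (j - 1) True" using j by (cases j) auto
  have tw: "takeWhile Not (replicate r False @ replicate j True @ zs) = replicate r False" for r zs
    using tw0 rj by simp
  have "replicate r False = (replicate r' False :: bool list)" using arg_cong[OF e2, of "takeWhile Not"] tw by simp
  then have rr: "r = r'" by simp
  then have "y = y'" using e by simp
  then show ?thesis using rr by simp
qed

definition pos_codes :: "nat \<Rightarrow> (bool list \<times> nat) set" where
  "pos_codes N = {(w,j). length w = N \<and> 0 < j \<and> valid_code w j}"

definition stem_triples :: "nat \<Rightarrow> (bool list \<times> nat \<times> nat) set" where
  "stem_triples N = (\<Union>k\<in>{..<N}. stems k \<times> shift_splits (N - k))"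

definition stem_block :: "bool list \<times> nat \<times> nat \<Rightarrow> bool list \<times> nat" where
  "stem_block x = (case x of (y,j,r) \<Rightarrow> (y @ replicate j True @ replicate r False, j))"

lemma bij_betw_stem_triples: "bij_betw stem_block (stem_triples N) (pos_codes N)"
proof (rule bij_betw_imageI)
  show "inj_on stem_block (stem_triples N)"
  proof (rule inj_onI)
    fix a b assume a: "a \<in> stem_triples N" and b: "b \<in> stem_triples N" and e: "stem_block a = stem_block b"
    obtain y j r where A: "a = (y,j,r)" "0 < j" using a unfolding stem_triples_def shift_splits_def by auto
    obtain y' j' r' where B: "b = (y',j',r')" using b by (cases b) auto
    have jj: "j = j'" using e A B by (simp add: stem_block_def)
    have "y @ replicate j True @ replicate r False = y' @ replicate j True @ replicate r' False"
      using e A B jj by (simp add: stem_block_def)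
    then have "y = y' \<and> r = r'" using stem_block_inj A(2) by blast
    then show "a = b" using A B jj by simp
  qed
next
  show "stem_block ` stem_triples N = pos_codes N"
  proof (intro equalityI subsetI)
    fix x assume "x \<in> stem_block ` stem_triples N"
    then obtain k y j r where k: "k < N" "y \<in> stems k" "(j,r) \<in> shift_splits (N - k)" "x = stem_block (y,j,r)"
      unfolding stem_triples_def by auto
    have y: "length y = k" "stem y" using k(2) unfolding stems_def by auto
    have jr: "0 < j" "j + r = N - k" using k(3) unfolding shift_splits_def by auto
    have "valid_code (y @ replicate j True @ replicate r False) j" unfolding valid_code_def using y jr by blast
    then show "x \<in> pos_codes N" using k(1,4) y jr unfolding pos_codes_def stem_block_def by simp
  next
    fix x assume "x \<in> pos_codes N"
    then obtain w j where wj: "x = (w,j)" "length w = N" "0 < j" "valid_code w j" unfolding pos_codes_def by auto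
    then obtain y r where yr: "stem y" "w = y @ replicate j True @ replicate r False"
      unfolding valid_code_def by auto
    have lk: "length y < N" using yr wj by simp
    have "(y,j,r) \<in> stems (length y) \<times> shift_splits (N - length y)"
      using yr wj unfolding stems_def shift_splits_def by auto
    then have "(y,j,r) \<in> stem_triples N" using lk unfolding stem_triples_def by blast
    moreover have "x = stem_block (y,j,r)" using wj yr unfolding stem_block_def by simp
    ultimately show "x \<in> stem_block ` stem_triples N" by blast
  qed
qed

lemma card_stem_triples: "card (stem_triples N) = (\<Sum>k<N. card (stems k) * (N - k))"
proof -
  have "card (stem_triples N) = (\<Sum>k<N. card (stems k \<times> shift_splits (N - k)))"
    unfolding stem_triples_def
    by (rule card_UN_disjoint) (simp_all add: finite_stems finite_shift_splits, auto simp: stems_def)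
  also have "\<dots> = (\<Sum>k<N. card (stems k) * (N - k))"
    by (simp add: card_cartesian_product card_shift_splits)
  finally show ?thesis .
qed

lemma card_codes: "card (codes N) + N + 1 = 2^(Suc N)"
proof -
  define zero_codes where "zero_codes = (\<lambda>w. (w, 0::nat)) ` {w::bool list. length w = N}"
  have codes_eq: "codes N = zero_codes \<union> pos_codes N"
    unfolding codes_def zero_codes_def pos_codes_def by (auto simp: valid_code_def)
  have "card zero_codes = 2^N"
    unfolding zero_codes_def using card_bool_lists by (simp add: card_image inj_on_def)
  moreover have "card (pos_codes N) = card (stem_triples N)"
    using bij_betw_same_card[OF bij_betw_stem_triples] by simp
  moreover have "finite (pos_codes N)"
    using bij_betw_finite[OF bij_betw_stem_triples] finite_stems finite_shift_splits
    by (auto simp: stem_triples_def)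
  moreover have "zero_codes \<inter> pos_codes N = {}" unfolding zero_codes_def pos_codes_def by auto
  ultimately have "card (codes N) = 2^N + card (stem_triples N)"
    unfolding codes_eq zero_codes_def using finite_bool_lists by (simp add: card_Un_disjoint)
  then show ?thesis using card_stem_triples sum_card_stems_weighted[of N] by simp
qed

lemma card_adm_head_ne_1: "card (adm_head_ne_1 (N + 2)) + N + 1 = 2^(Suc N)"
  using bij_betw_same_card[OF bij_betw_decode_codes] card_codes by simp

lemma finite_adm: "finite (adm n)"
proof -
  have "adm n \<subseteq> {xs. set xs \<subseteq> {1..n} \<and> length xs = n}"
    unfolding adm_def admissible_def perms_of_def using distinct_card by fastforce
  then show ?thesis using finite_lists_length_eq[of "{1..n}" n] finite_subset by auto
qed

lemma adm_Suc: "adm (Suc n) = (\<lambda>s. 1 # map Suc s) ` adm n \<union> adm_head_ne_1 (Suc n)"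
proof (intro equalityI subsetI)
  fix p assume "p \<in> adm (Suc n)"
  then have p: "admissible (Suc n) p" unfolding adm_def by simp
  show "p \<in> (\<lambda>s. 1 # map Suc s) ` adm n \<union> adm_head_ne_1 (Suc n)"
  proof (cases "p!0 = 1")
    case True
    have "set p = {1..Suc n}" using p unfolding admissible_def perms_of_def by auto
    then obtain t where t: "p = 1 # t" "\<forall>x\<in>set t. 1 \<le> x"
      using True by (cases p) (auto, force)
    moreover have "map Suc (map (\<lambda>x. x - 1) t) = t" using t(2) by (induction t) auto
    ultimately have "p = 1 # map Suc (map (\<lambda>x. x - 1) t)" by simp
    then show ?thesis using p admissible_prepend_one unfolding adm_def by (metis Un_iff image_eqI mem_Collect_eq)
  qed (use p in \<open>simp add: adm_head_ne_1_def\<close>)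
next
  fix p assume "p \<in> (\<lambda>s. 1 # map Suc s) ` adm n \<union> adm_head_ne_1 (Suc n)"
  then show "p \<in> adm (Suc n)"
    unfolding adm_def adm_head_ne_1_def using admissible_prepend_one by auto
qed

lemma card_adm_Suc: "card (adm (Suc n)) = card (adm n) + card (adm_head_ne_1 (Suc n))"
proof -
  have "finite (adm_head_ne_1 (Suc n))"
    using finite_adm[of "Suc n"] by (rule finite_subset[rotated]) (auto simp: adm_def adm_head_ne_1_def)
  moreover have "card ((\<lambda>s. 1 # map Suc s) ` adm n) = card (adm n)"
    by (rule card_image) (auto simp: inj_on_def)
  moreover have "(\<lambda>s. 1 # map Suc s) ` adm n \<inter> adm_head_ne_1 (Suc n) = {}"
    unfolding adm_head_ne_1_def by auto
  ultimately show ?thesis unfolding adm_Suc using finite_adm by (simp add: card_Un_disjoint)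
qed

lemma adm_1: "adm 1 = {[1]}"
proof (intro equalityI subsetI)
  fix p assume "p \<in> adm 1"
  then have "distinct p" and set_p: "set p = {1}" unfolding adm_def admissible_def perms_of_def by auto
  then have "length p = 1" using distinct_card[of p] by simp
  then obtain x where "p = [x]" by (cases p) auto
  then show "p \<in> {[1]}" using set_p by simp
next
  fix p :: "nat list" assume "p \<in> {[1]}"
  then show "p \<in> adm 1"
    unfolding adm_def admissible_def perms_of_def fishburn_def has_321_def has_21354_def by auto
qed

lemma card_adm: "n \<ge> 1 \<Longrightarrow> int (card (adm n)) = 2 ^ n - int (n choose 2) - 1"
proof (induction n rule: dec_induct)
  case base
  then show ?case using adm_1 by simp
next
  case (step n)
  have "card (adm_head_ne_1 (Suc n)) + n = 2 ^ n"
    using card_adm_head_ne_1[of "n - 1"] step(1) by (simp add: Suc_diff_le)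
  then have "int (card (adm_head_ne_1 (Suc n)) + n) = 2 ^ n" by simp
  moreover have "Suc n choose 2 = n + (n choose 2)"
    using binomial_Suc_Suc[of n 1] by (simp add: numeral_2_eq_2)
  ultimately show ?case using step.IH card_adm_Suc[of n] by (simp add: algebra_simps)
qed

theorem mainTheorem17:
  fixes n :: nat
  assumes "n \<ge> 1"
  shows "int (card (F n [[3,2,1], [2,1,3,5,4]])) = 2 ^ n - int (n choose 2) - 1"
  using card_adm[OF assms] unfolding F_321_21354_eq adm_def .

end
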